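(* Let $\lambda=(\lambda_1,\dots,\lambda_N)$ be a partition. The map sending a column-strict tableau $\emptyset=\lambda^{(0)}\subset\lambda^{(1)}\subset\dots\subset\lambda^{(N)}=\lambda$ of shape $\lambda$ to the matrix $\theta$ with $\theta_{i,j}=\lambda^{(j)}_i-\lambda^{(j-1)}_i$ for $i<j$ and $\theta_{i,j}=0$ for $i\ge j$ is a bijection from the set of column-strict tableaux of shape $\lambda$ onto $$\mathsf{Pol}_\lambda=\Big\{\theta\in\mathsf M^{(N)}:0\le\theta_{i,j}\le\lambda_i-\lambda_{i+1}-\sum_{k=j+1}^N(\theta_{i,k}-\theta_{i+1,k})\Big\}.$$
   Context: A column-strict tableau of shape $\lambda$ is a sequence of partitions $\emptyset=\lambda^{(0)}\subset\dots\subset\lambda^{(N)}=\lambda$ such that each skew diagram $\lambda^{(k)}-\lambda^{(k-1)}$ is a horizontal strip (i.e. $\lambda^{(k)}_1\ge\lambda^{(k-1)}_1\ge\lambda^{(k)}_2\ge\lambda^{(k-1)}_2\ge\dots$). $\mathsf M^{(N)}$ is the set of $N\times N$ matrices with entries in $\mathbb Z_{\ge0}$ that vanish on and below the diagonal. $\lambda_{N+1}=0$. *)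

theory Defs
  imports Main
begin

text \<open>A partition with at most N parts: lam :: nat \<Rightarrow> nat, parts lam 1 \<ge> lam 2 \<ge> ...,
  indices start at 1, lam i = 0 for i > N (so lam (N+1) = 0); lam 0 is unused and normalised to 0.\<close>
definition is_partition :: "nat \<Rightarrow> (nat \<Rightarrow> nat) \<Rightarrow> bool" where
  "is_partition N lam \<longleftrightarrow> lam 0 = 0 \<and> (\<forall>i\<ge>1. lam (Suc i) \<le> lam i) \<and> (\<forall>i>N. lam i = 0)"

definition horizontal_strip :: "(nat \<Rightarrow> nat) \<Rightarrow> (nat \<Rightarrow> nat) \<Rightarrow> bool" where
  "horizontal_strip mu nu \<longleftrightarrow> (\<forall>i\<ge>1. nu i \<le> mu i \<and> mu (Suc i) \<le> nu i)"

text \<open>Column-strict tableaux of shape lam (entries in 1..N): sequences T 0, ..., T N of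
  partitions (T k i = i-th part of lambda^(k)), T 0 empty, T N = lam, successive
  differences horizontal strips. Values outside k \<le> N, i \<ge> 1 are normalised to 0.\<close>
definition CST :: "nat \<Rightarrow> (nat \<Rightarrow> nat) \<Rightarrow> (nat \<Rightarrow> nat \<Rightarrow> nat) set" where
  "CST N lam = {T. (\<forall>k\<le>N. is_partition N (T k))
                 \<and> (\<forall>i. T 0 i = 0)
                 \<and> (\<forall>i\<ge>1. T N i = lam i)
                 \<and> (\<forall>k\<in>{1..N}. horizontal_strip (T k) (T (k - 1)))
                 \<and> (\<forall>k>N. \<forall>i. T k i = 0)}"

definition M :: "nat \<Rightarrow> (nat \<Rightarrow> nat \<Rightarrow> nat) set" where
  "M N = {\<theta>. \<forall>i j. \<not> (1 \<le> i \<and> i < j \<and> j \<le> N) \<longrightarrow> \<theta> i j = 0}"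

definition Pol :: "nat \<Rightarrow> (nat \<Rightarrow> nat) \<Rightarrow> (nat \<Rightarrow> nat \<Rightarrow> nat) set" where
  "Pol N lam = {\<theta> \<in> M N. \<forall>i j. 1 \<le> i \<and> i < j \<and> j \<le> N \<longrightarrow>
      int (\<theta> i j) \<le> int (lam i) - int (lam (Suc i))
                    - (\<Sum>k=j+1..N. int (\<theta> i k) - int (\<theta> (Suc i) k))}"

definition tab_to_mat :: "nat \<Rightarrow> (nat \<Rightarrow> nat \<Rightarrow> nat) \<Rightarrow> (nat \<Rightarrow> nat \<Rightarrow> nat)" where
  "tab_to_mat N T = (\<lambda>i j. if 1 \<le> i \<and> i < j \<and> j \<le> N then T j i - T (j - 1) i else 0)"

end

theory Submission
  imports Defs
begin

text \<open>Since \<open>\<theta> i j\<close> records the growth of row \<open>i\<close> at step \<open>j\<close> and the last shape is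
  \<open>\<lambda>\<close>, telescoping gives \<open>\<lambda>^(k)_i = \<lambda>_i - (\<Sum>j>k. \<theta> i j)\<close>, so the tableau is determined by
  \<open>\<theta>\<close>. Under this substitution the interlacing inequality \<open>\<lambda>^(j)_(i+1) \<le> \<lambda>^(j-1)_i\<close> becomes
  exactly the defining inequality of \<open>Pol\<close>, while \<open>\<lambda>^(j-1)_i \<le> \<lambda>^(j)_i\<close> is \<open>\<theta> i j \<ge> 0\<close>.
  Conversely the formula defines a tableau from any \<open>\<theta> \<in> Pol\<close>; its entries are nonnegative
  because the interlacing inequalities chain down to \<open>\<lambda>^(N)_i = \<lambda>_i \<ge> 0\<close>.\<close>

lemma CST_horizontal_strip:
  assumes "T \<in> CST N lam" "1 \<le> k" "k \<le> N"
  shows "horizontal_strip (T k) (T (k - 1))"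
  using assms by (simp add: CST_def)

lemma CST_row_mono:
  assumes "T \<in> CST N lam" "1 \<le> k" "k \<le> N" "1 \<le> i"
  shows "T (k - 1) i \<le> T k i"
  using CST_horizontal_strip[OF assms(1-3)] assms(4) by (simp add: horizontal_strip_def)

lemma CST_interlace:
  assumes "T \<in> CST N lam" "1 \<le> k" "k \<le> N" "1 \<le> i"
  shows "T k (Suc i) \<le> T (k - 1) i"
  using CST_horizontal_strip[OF assms(1-3)] assms(4) by (simp add: horizontal_strip_def)

lemma CST_zero_below_diagonal:
  assumes "T \<in> CST N lam" "k \<le> N" "k < i"
  shows "T k i = 0"
  using assms(2,3)
proof (induction k arbitrary: i)
  case 0
  then show ?case using assms(1) by (simp add: CST_def)
next
  case (Suc k)
  then obtain i' where i': "i = Suc i'" "k < i'" by (cases i) auto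
  have "T (Suc k) (Suc i') \<le> T k i'"
    using CST_interlace[OF assms(1), of "Suc k" i'] Suc.prems i' by simp
  then show ?case using Suc.IH[of i'] Suc.prems i' by simp
qed

lemma tab_to_mat_CST:
  assumes "T \<in> CST N lam" "1 \<le> i" "i < j" "j \<le> N"
  shows "int (tab_to_mat N T i j) = int (T j i) - int (T (j - 1) i)"
  using assms CST_row_mono[OF assms(1), of j i] by (simp add: tab_to_mat_def of_nat_diff)

lemma CST_row_eq:
  assumes "T \<in> CST N lam" "k \<le> N" "1 \<le> i" "i \<le> k"
  shows "int (T k i) = int (lam i) - (\<Sum>j = k + 1..N. int (tab_to_mat N T i j))"
proof -
  have "(\<Sum>j = Suc k..N. int (tab_to_mat N T i j)) = (\<Sum>j = Suc k..N. int (T j i) - int (T (j - 1) i))"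
    using assms by (intro sum.cong) (auto simp: tab_to_mat_CST)
  also have "\<dots> = int (T N i) - int (T k i)"
    using sum_telescope''[OF assms(2)] .
  also have "T N i = lam i"
    using assms by (simp add: CST_def)
  finally show ?thesis by simp
qed

lemma tab_to_mat_in_Pol:
  assumes "T \<in> CST N lam"
  shows "tab_to_mat N T \<in> Pol N lam"
proof -
  let ?\<theta> = "tab_to_mat N T"
  have "int (?\<theta> i j) \<le> int (lam i) - int (lam (Suc i)) - (\<Sum>k = j + 1..N. int (?\<theta> i k) - int (?\<theta> (Suc i) k))"
    if ij: "1 \<le> i" "i < j" "j \<le> N" for i j
  proof -
    have row_i: "int (T j i) = int (lam i) - (\<Sum>k = j + 1..N. int (?\<theta> i k))"
      using CST_row_eq[OF assms, of j i] ij by simp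
    have row_Suc_i: "int (T j (Suc i)) = int (lam (Suc i)) - (\<Sum>k = j + 1..N. int (?\<theta> (Suc i) k))"
      using CST_row_eq[OF assms, of j "Suc i"] ij by simp
    have "T j (Suc i) \<le> T (j - 1) i"
      using CST_interlace[OF assms, of j i] ij by simp
    then show ?thesis
      using row_i row_Suc_i tab_to_mat_CST[OF assms ij] by (simp add: sum_subtractf)
  qed
  then show ?thesis by (simp add: Pol_def M_def tab_to_mat_def)
qed

lemma inj_on_tab_to_mat: "inj_on (tab_to_mat N) (CST N lam)"
proof (rule inj_onI, rule ext, rule ext)
  fix T T' k i
  assume T: "T \<in> CST N lam" and T': "T' \<in> CST N lam" and eq: "tab_to_mat N T = tab_to_mat N T'"
  consider "N < k" | "k \<le> N" "i = 0" | "k \<le> N" "1 \<le> i" "i \<le> k" | "k \<le> N" "k < i" by linarith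
  then show "T k i = T' k i"
  proof cases
    case 1
    then show ?thesis using T T' by (simp add: CST_def)
  next
    case 2
    then show ?thesis using T T' by (auto simp: CST_def is_partition_def)
  next
    case 3
    then show ?thesis using CST_row_eq[OF T 3] CST_row_eq[OF T' 3] eq by simp
  next
    case 4
    then show ?thesis using CST_zero_below_diagonal[OF T 4] CST_zero_below_diagonal[OF T' 4] by simp
  qed
qed

text \<open>\<open>row_remainder N lam \<theta> k i\<close> is the would-be \<open>\<lambda>^(k)_i\<close> of the inverse map.\<close>

definition row_remainder :: "nat \<Rightarrow> (nat \<Rightarrow> nat) \<Rightarrow> (nat \<Rightarrow> nat \<Rightarrow> nat) \<Rightarrow> nat \<Rightarrow> nat \<Rightarrow> int" where
  "row_remainder N lam \<theta> k i = int (lam i) - (\<Sum>j = k + 1..N. int (\<theta> i j))"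

definition mat_to_tab :: "nat \<Rightarrow> (nat \<Rightarrow> nat) \<Rightarrow> (nat \<Rightarrow> nat \<Rightarrow> nat) \<Rightarrow> nat \<Rightarrow> nat \<Rightarrow> nat" where
  "mat_to_tab N lam \<theta> k i = (if k \<le> N \<and> 1 \<le> i \<and> i \<le> k then nat (row_remainder N lam \<theta> k i) else 0)"

lemma row_remainder_pred:
  assumes "1 \<le> k" "k \<le> N"
  shows "row_remainder N lam \<theta> (k - 1) i = row_remainder N lam \<theta> k i - int (\<theta> i k)"
proof -
  have "{k - 1 + 1..N} = insert k {k + 1..N}" using assms by auto
  then show ?thesis by (simp add: row_remainder_def)
qed

lemma row_remainder_pred_le:
  assumes "1 \<le> k" "k \<le> N"
  shows "row_remainder N lam \<theta> (k - 1) i \<le> row_remainder N lam \<theta> k i"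
  using row_remainder_pred[OF assms] by simp

lemma Pol_interlace:
  assumes "\<theta> \<in> Pol N lam" "1 \<le> i" "i < k" "k \<le> N"
  shows "row_remainder N lam \<theta> k (Suc i) \<le> row_remainder N lam \<theta> (k - 1) i"
proof -
  have "int (\<theta> i k) \<le> int (lam i) - int (lam (Suc i)) - (\<Sum>j = k + 1..N. int (\<theta> i j) - int (\<theta> (Suc i) j))"
    using assms by (simp add: Pol_def)
  then show ?thesis
    using row_remainder_pred[of k N lam \<theta> i] assms
    by (simp add: row_remainder_def sum_subtractf)
qed

lemma Pol_row_remainder_nonneg:
  assumes "\<theta> \<in> Pol N lam" "1 \<le> i" "i \<le> k" "k \<le> N"
  shows "0 \<le> row_remainder N lam \<theta> k i"
  using assms(4,2,3)
proof (induction k arbitrary: i rule: inc_induct)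
  case base
  then show ?case by (simp add: row_remainder_def)
next
  case (step k)
  have "row_remainder N lam \<theta> (Suc k) (Suc i) \<le> row_remainder N lam \<theta> k i"
    using Pol_interlace[OF assms(1), of i "Suc k"] step by simp
  moreover have "0 \<le> row_remainder N lam \<theta> (Suc k) (Suc i)"
    using step.IH[of "Suc i"] step.prems by simp
  ultimately show ?case by simp
qed

lemma mat_to_tab_in_CST:
  assumes "is_partition N lam" "\<theta> \<in> Pol N lam"
  shows "mat_to_tab N lam \<theta> \<in> CST N lam"
proof -
  let ?T = "mat_to_tab N lam \<theta>"
  have strip: "horizontal_strip (?T k) (?T (k - 1))" if k: "1 \<le> k" "k \<le> N" for k
  proof -
    have "?T (k - 1) i \<le> ?T k i" if "1 \<le> i" for i
      using row_remainder_pred_le[OF k, of lam \<theta> i] that k by (auto simp: mat_to_tab_def intro: nat_mono)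
    moreover have "?T k (Suc i) \<le> ?T (k - 1) i" if "1 \<le> i" for i
      using Pol_interlace[OF assms(2), of i k] that k by (auto simp: mat_to_tab_def intro: nat_mono)
    ultimately show ?thesis by (simp add: horizontal_strip_def)
  qed
  have partition: "is_partition N (?T k)" if "k \<le> N" for k
  proof -
    have "?T k (Suc i) \<le> ?T k i" if "1 \<le> i" for i
    proof (cases "Suc i \<le> k")
      case True
      then have "?T k (Suc i) \<le> ?T (k - 1) i" "?T (k - 1) i \<le> ?T k i"
        using strip[of k] \<open>k \<le> N\<close> that by (simp_all add: horizontal_strip_def)
      then show ?thesis by simp
    qed (simp add: mat_to_tab_def)
    then show ?thesis using that by (auto simp: is_partition_def mat_to_tab_def)
  qed
  have top_row: "?T N i = lam i" if "1 \<le> i" for i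
    using assms(1) that by (auto simp: mat_to_tab_def row_remainder_def is_partition_def)
  show ?thesis
    unfolding CST_def using partition strip top_row by (auto simp: mat_to_tab_def)
qed

lemma tab_to_mat_mat_to_tab:
  assumes "\<theta> \<in> Pol N lam"
  shows "tab_to_mat N (mat_to_tab N lam \<theta>) = \<theta>"
proof (intro ext)
  fix i j
  show "tab_to_mat N (mat_to_tab N lam \<theta>) i j = \<theta> i j"
  proof (cases "1 \<le> i \<and> i < j \<and> j \<le> N")
    case True
    then have "int (mat_to_tab N lam \<theta> j i) = row_remainder N lam \<theta> j i"
      "int (mat_to_tab N lam \<theta> (j - 1) i) = row_remainder N lam \<theta> (j - 1) i"
      using Pol_row_remainder_nonneg[OF assms, of i "j - 1"] Pol_row_remainder_nonneg[OF assms, of i j]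
      by (auto simp: mat_to_tab_def)
    then show ?thesis
      using row_remainder_pred[of j N lam \<theta> i] True
      by (simp add: tab_to_mat_def)
  next
    case False
    then show ?thesis using assms by (auto simp: tab_to_mat_def Pol_def M_def)
  qed
qed

theorem lemma2p1:
  assumes "is_partition N lam"
  shows "bij_betw (tab_to_mat N) (CST N lam) (Pol N lam)"
proof (rule bij_betw_imageI)
  show "inj_on (tab_to_mat N) (CST N lam)"
    by (rule inj_on_tab_to_mat)
  show "tab_to_mat N ` CST N lam = Pol N lam"
  proof
    show "tab_to_mat N ` CST N lam \<subseteq> Pol N lam"
      using tab_to_mat_in_Pol by blast
    show "Pol N lam \<subseteq> tab_to_mat N ` CST N lam"
      using mat_to_tab_in_CST[OF assms] tab_to_mat_mat_to_tab by (metis image_eqI subsetI)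
  qed
qed

end
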